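(* For every sufficiently small $\eta>0$ there exists $\nu_0>0$ such that for every $\nu\in(0,\nu_0]$ there exists $\beta_0>0$ such that for every $\beta\in(0,\beta_0]$ there exists $\alpha_0>0$ such that for every $\alpha\in(0,\alpha_0]$ there exists $n_0$ such that for all $n\ge n_0$ the following holds. Let $\hat G$ be an $(\alpha,\eta,\nu)$-superextremal biclique on $n$ vertices with partition $V(\hat G)=A\uplus B$, let $M$ be a matching in $\hat G[B]$ with $|E(M)|\le\alpha n$, and set $Z=E(M)$. Suppose that $\hat G[A]$ has no edges, the edge set of $\hat G[B]$ is exactly $E(M)$, and for every edge $ab\in E(\hat G)$ with $a\in A,b\in B$ we have $\max\{d_{\hat G}(a,B),d_{\hat G}(b,A)\}\ge(1/2-\eta)n$. Then for every directed Hamilton cycle $\vec H$ of $\hat G$ and every edge $e\in E(H)\setminus Z$, there are at least $\beta n^2$ pairs $(e',i)$ with $e'\in E(\hat G)\setminus E(H)$ and $i\in\{1,2\}$ such that the switching $s_i(\vec H;e,e')$ is admissible (with respect to $\hat G$).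
   Context: $d_G(v,X)$ is the number of neighbours of $v$ in $X$. A graph $G$ on $n$ vertices is an $(\alpha,\varepsilon,\nu)$-superextremal biclique if there is a partition $V(G)=A\uplus B$ with: (B1) $0\le |B|-|A|\le\alpha n$; (B2) $d(a,B)\ge(1/2-\varepsilon)n$ for all but at most $\alpha n$ vertices $a\in A$; (B3) $d(a,B)\ge\nu n$ for all $a\in A$; (B4) $d(b,A)\ge(1/2-\varepsilon)n$ for all but at most $\alpha n$ vertices $b\in B$; (B5) $d(b,A)\ge(1/4-\varepsilon)n$ for all $b\in B$; (B6) if $|A|\ne\lfloor n/2\rfloor$, then $d(b,B)\le 2\nu n$ for all $b\in B$. A directed Hamilton cycle $\vec H$ is a Hamilton cycle $H$ with a cyclic orientation; its successor function $\pi$ sends $x$ to the head of the arc leaving $x$. For $e=x\pi(x)\in E(H)$ and $e'=x'y'\notin E(H)$ with endpoints labelled so that $x$ lies on the directed path of $\vec H$ from $y'$ to $x'$, let $H_1=(H-\{e,x'\pi(x'),\pi^{-1}(y')y'\})+\{e',x\pi(x'),\pi^{-1}(y')\pi(x)\}$ and $H_2=(H-\{e,x'\pi(x'),\pi^{-1}(y')y'\})+\{e',x\pi^{-1}(y'),\pi(x)\pi(x')\}$; $s_i(\vec H;e,e')$ is $H_i$ oriented to contain the arc $(x',y')$. It is admissible (with respect to a graph $G$) if $H_i\subseteq G$. *)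

theory Defs
  imports Complex_Main
begin

definition simple_graph :: "'a set \<Rightarrow> 'a set set \<Rightarrow> bool" where
  "simple_graph V E \<longleftrightarrow> finite V \<and>
     (\<forall>e\<in>E. \<exists>u v. e = {u, v} \<and> u \<noteq> v \<and> u \<in> V \<and> v \<in> V)"

definition deg_in :: "'a set set \<Rightarrow> 'a \<Rightarrow> 'a set \<Rightarrow> nat" where
  "deg_in E v X = card {u \<in> X. {v, u} \<in> E}"

definition superextremal_biclique ::
  "real \<Rightarrow> real \<Rightarrow> real \<Rightarrow> 'a set \<Rightarrow> 'a set set \<Rightarrow> 'a set \<Rightarrow> 'a set \<Rightarrow> bool" where
  "superextremal_biclique \<alpha> \<epsilon> \<nu> V E A B \<longleftrightarrow>
     (let n = real (card V) in
       simple_graph V E \<and> A \<inter> B = {} \<and> A \<union> B = V \<and>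
       0 \<le> real (card B) - real (card A) \<and> real (card B) - real (card A) \<le> \<alpha> * n \<and>
       real (card {a \<in> A. real (deg_in E a B) < (1/2 - \<epsilon>) * n}) \<le> \<alpha> * n \<and>
       (\<forall>a\<in>A. real (deg_in E a B) \<ge> \<nu> * n) \<and>
       real (card {b \<in> B. real (deg_in E b A) < (1/2 - \<epsilon>) * n}) \<le> \<alpha> * n \<and>
       (\<forall>b\<in>B. real (deg_in E b A) \<ge> (1/4 - \<epsilon>) * n) \<and>
       (card A \<noteq> card V div 2 \<longrightarrow> (\<forall>b\<in>B. real (deg_in E b B) \<le> 2 * \<nu> * n)))"

definition matching_in :: "'a set set \<Rightarrow> 'a set \<Rightarrow> 'a set set \<Rightarrow> bool" where
  "matching_in E B M \<longleftrightarrow> M \<subseteq> E \<and> (\<forall>e\<in>M. e \<subseteq> B) \<and>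
     (\<forall>e\<in>M. \<forall>f\<in>M. e \<noteq> f \<longrightarrow> e \<inter> f = {})"

text \<open>A directed Hamilton cycle of (V,E), given by its successor function \<pi>
  (a cyclic permutation of V with a single orbit; only its values on V matter).\<close>
definition dir_ham_cycle :: "'a set \<Rightarrow> 'a set set \<Rightarrow> ('a \<Rightarrow> 'a) \<Rightarrow> bool" where
  "dir_ham_cycle V E \<pi> \<longleftrightarrow> card V \<ge> 3 \<and> bij_betw \<pi> V V \<and>
     (\<forall>x\<in>V. \<forall>y\<in>V. \<exists>k. (\<pi> ^^ k) x = y) \<and> (\<forall>x\<in>V. {x, \<pi> x} \<in> E)"

definition ham_edges :: "'a set \<Rightarrow> ('a \<Rightarrow> 'a) \<Rightarrow> 'a set set" where
  "ham_edges V \<pi> = {{x, \<pi> x} | x. x \<in> V}"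

definition on_dir_path :: "('a \<Rightarrow> 'a) \<Rightarrow> 'a \<Rightarrow> 'a \<Rightarrow> 'a \<Rightarrow> bool" where
  "on_dir_path \<pi> u v w \<longleftrightarrow>
     (\<exists>k l. k \<le> l \<and> (\<pi> ^^ k) u = w \<and> (\<pi> ^^ l) u = v \<and> (\<forall>j<l. (\<pi> ^^ j) u \<noteq> v))"

definition switch_edges ::
  "nat \<Rightarrow> 'a set \<Rightarrow> ('a \<Rightarrow> 'a) \<Rightarrow> 'a \<Rightarrow> 'a \<Rightarrow> 'a \<Rightarrow> 'a set set" where
  "switch_edges i V \<pi> x x' y' =
     (let pinv = inv_into V \<pi>;
          H0 = ham_edges V \<pi> - {{x, \<pi> x}, {x', \<pi> x'}, {pinv y', y'}} in
      if i = 1 then H0 \<union> {{x', y'}, {x, \<pi> x'}, {pinv y', \<pi> x}}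
      else H0 \<union> {{x', y'}, {x, pinv y'}, {\<pi> x, \<pi> x'}})"

definition admissible_switch ::
  "'a set \<Rightarrow> 'a set set \<Rightarrow> ('a \<Rightarrow> 'a) \<Rightarrow> 'a \<Rightarrow> 'a set \<Rightarrow> nat \<Rightarrow> bool" where
  "admissible_switch V E \<pi> x e' i \<longleftrightarrow>
     (\<exists>x' y'. e' = {x', y'} \<and> on_dir_path \<pi> y' x' x \<and> switch_edges i V \<pi> x x' y' \<subseteq> E)"

end

theory Submission
  imports Defs
begin

text \<open>Read the cycle from \<open>x\<close> as \<open>vtx 0 = x, vtx 1 = \<pi> x, \<dots>\<close>. Since \<open>A\<close> is independent
  and the edges inside \<open>B\<close> are the matching edges, one end \<open>u\<close> of \<open>x \<pi>(x)\<close> lies in \<open>A\<close> and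
  the other one, \<open>w\<close>, in \<open>B\<close>. There are at least \<open>\<nu>n\<close> positions \<open>p\<close> carrying a
  \<open>B\<close>-neighbour of \<open>u\<close>, and for all but \<open>O(\<alpha>n)\<close> of them both cycle neighbours of
  \<open>vtx p\<close> are \<open>A\<close>-vertices of degree at least \<open>(1/2 - \<eta>)n\<close> into \<open>B\<close>, i.e. they miss at
  most \<open>(\<eta> + \<alpha>/2)n\<close> vertices of \<open>B\<close>. Among the at least \<open>(1/4 - \<eta>)n\<close> positions
  \<open>q\<close> carrying an \<open>A\<close>-neighbour of \<open>w\<close>, whose cycle neighbours lie in \<open>B\<close>, at least
  \<open>n/32\<close> therefore have \<open>vtx (p - 1) vtx (q + 1)\<close> and \<open>vtx (p + 1) vtx (q - 1)\<close> as edges.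
  Each such pair \<open>(p, q)\<close> yields an admissible switching whose new edge is one of these two
  chords, and distinct pairs yield distinct switchings, so there are at least
  \<open>\<nu>n\<^sup>2/128\<close> of them.\<close>

lemma simple_graph_card_edge:
  "simple_graph V E \<Longrightarrow> e \<in> E \<Longrightarrow> card e = 2"
  unfolding simple_graph_def by auto

lemma simple_graph_finite_edges:
  "simple_graph V E \<Longrightarrow> finite E"
  unfolding simple_graph_def by (rule finite_subset[of _ "Pow V"]) auto

lemma card_le_card_Int_inner_positions:
  fixes n :: nat
  assumes "P \<subseteq> {..<n}"
  shows "card P \<le> card (P \<inter> {2..<n-2}) + 4"
proof -
  have "card P \<le> card (P \<inter> {2..<n-2} \<union> ({..<n} - {2..<n-2}))"
    using assms by (intro card_mono) auto
  also have "\<dots> \<le> card (P \<inter> {2..<n-2}) + card ({..<n} - {2..<n-2})"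
    by (rule card_Un_le)
  also have "card ({..<n} - {2..<n-2}) = n - (n - 4)"
    by (subst card_Diff_subset) auto
  finally show ?thesis by linarith
qed

lemma ham_edges_subset: "dir_ham_cycle V E \<pi> \<Longrightarrow> ham_edges V \<pi> \<subseteq> E"
  unfolding dir_ham_cycle_def ham_edges_def by auto

locale dir_ham_cycle_at =
  fixes V :: "'a set" and E :: "'a set set" and \<pi> :: "'a \<Rightarrow> 'a" and x :: 'a
  assumes ham: "dir_ham_cycle V E \<pi>" and x_in_V: "x \<in> V"
begin

abbreviation n :: nat where "n \<equiv> card V"

abbreviation vtx :: "nat \<Rightarrow> 'a" where "vtx k \<equiv> (\<pi> ^^ k) x"

lemma finite_V: "finite V" and three_le_n: "3 \<le> n"
  using ham card.infinite unfolding dir_ham_cycle_def by fastforce+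

lemma bij_funpow: "bij_betw (\<pi> ^^ k) V V"
  using ham bij_betw_funpow unfolding dir_ham_cycle_def by blast

lemma vtx_in_V [simp]: "vtx k \<in> V"
  using bij_funpow x_in_V bij_betw_apply by metis

lemma \<pi>_in_V [simp]: "y \<in> V \<Longrightarrow> \<pi> y \<in> V"
  using bij_funpow[of 1] bij_betw_apply by fastforce

lemma vtx_edge: "{vtx k, vtx (Suc k)} \<in> E"
  using ham vtx_in_V unfolding dir_ham_cycle_def by simp

lemma vtx_pred_edge: "1 \<le> p \<Longrightarrow> {vtx p, vtx (p - 1)} \<in> E"
  using vtx_edge[of "p - 1"] by (cases p) (auto simp: insert_commute)

lemma n_le_return_time:
  assumes "0 < d" "vtx d = x"
  shows "n \<le> d"
proof -
  have "V \<subseteq> vtx ` {..<d}"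
  proof
    fix y assume "y \<in> V"
    then obtain k where "vtx k = y" using ham x_in_V unfolding dir_ham_cycle_def by blast
    then have "vtx (k mod d) = y" using funpow_mod_eq[where f=\<pi> and n=d and x=x and m=k] assms(2) by simp
    then show "y \<in> vtx ` {..<d}" using assms(1) by auto
  qed
  then have "n \<le> card (vtx ` {..<d})" by (simp add: card_mono)
  also have "\<dots> \<le> d" using card_image_le[of "{..<d}" vtx] by simp
  finally show ?thesis .
qed

lemma vtx_cancel:
  assumes "i \<le> j" "vtx i = vtx j"
  shows "vtx (j - i) = x"
proof -
  have "vtx j = (\<pi> ^^ i) (vtx (j - i))"
    using assms(1) by (metis comp_apply funpow_add le_add_diff_inverse)
  then have "(\<pi> ^^ i) (vtx (j - i)) = (\<pi> ^^ i) x"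
    using assms(2) by simp
  then show ?thesis
    using bij_funpow[of i] x_in_V unfolding bij_betw_def inj_on_def by simp
qed

lemma inj_on_vtx: "inj_on vtx {..<n}"
proof (rule linorder_inj_onI')
  fix i j assume ij: "i \<in> {..<n}" "j \<in> {..<n}" "i < j"
  show "vtx i \<noteq> vtx j"
  proof
    assume "vtx i = vtx j"
    then have "vtx (j - i) = x" using ij by (intro vtx_cancel) auto
    then have "n \<le> j - i" using ij by (intro n_le_return_time) auto
    then show False using ij by auto
  qed
qed

lemma vtx_image: "vtx ` {..<n} = V"
proof (rule card_subset_eq[OF finite_V])
  show "vtx ` {..<n} \<subseteq> V" by auto
  show "card (vtx ` {..<n}) = n" using card_image[OF inj_on_vtx] by simp
qed

lemma vtx_n: "vtx n = x"
proof -
  have "vtx n \<in> vtx ` {..<n}" using vtx_image by simp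
  then obtain i where i: "i < n" "vtx i = vtx n" by auto
  show ?thesis
  proof (cases "i = 0")
    case False
    have "vtx (n - i) = x" using vtx_cancel[OF _ i(2)] i(1) by simp
    then have "n \<le> n - i" using i(1) False n_le_return_time[of "n - i"] by simp
    then show ?thesis using i(1) False by simp
  qed (use i in simp)
qed

lemma vtx_mod: "vtx (k mod n) = vtx k"
  by (rule funpow_mod_eq[OF vtx_n])

lemma vtx_eq_iff: "i < n \<Longrightarrow> j < n \<Longrightarrow> vtx i = vtx j \<longleftrightarrow> i = j"
  using inj_on_vtx by (auto dest: inj_onD)

lemma vtx_doubleton_eq:
  assumes "a < n" "b < n" "a' < n" "b' < n" "{vtx a, vtx b} = {vtx a', vtx b'}"
  shows "{a, b} = {a', b'}"
  using inj_on_image_eq_iff[OF inj_on_vtx, of "{a, b}" "{a', b'}"] assms by auto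

lemma chord_not_ham_edge:
  assumes "1 \<le> i" "i + 2 \<le> j" "j + 2 \<le> n"
  shows "{vtx i, vtx j} \<notin> ham_edges V \<pi>"
proof
  assume "{vtx i, vtx j} \<in> ham_edges V \<pi>"
  then obtain y where "y \<in> V" and ij: "{vtx i, vtx j} = {y, \<pi> y}"
    unfolding ham_edges_def by auto
  then have "y \<in> vtx ` {..<n}"
    using vtx_image by simp
  then obtain k where k: "k < n" "y = vtx k"
    by auto
  define k' where "k' = Suc k mod n"
  have "\<pi> y = vtx k'"
    unfolding k'_def vtx_mod k(2) by simp
  then have "{vtx i, vtx j} = {vtx k, vtx k'}"
    using ij k(2) by simp
  then have "{i, j} = {k, k'}"
    using assms k(1) three_le_n by (intro vtx_doubleton_eq) (simp_all add: k'_def)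
  moreover have "k' = (if Suc k = n then 0 else Suc k)"
    using k(1) by (simp add: k'_def mod_Suc)
  ultimately show False
    using assms k(1) unfolding doubleton_eq_iff by (auto split: if_splits)
qed

lemma on_dir_path_vtx:
  assumes "i < j" "j < n"
  shows "on_dir_path \<pi> (vtx j) (vtx i) x"
  unfolding on_dir_path_def
proof (intro exI conjI allI impI)
  have shift: "(\<pi> ^^ m) (vtx j) = vtx (m + j)" for m
    by (simp add: funpow_add)
  show "n - j \<le> n - j + i" by simp
  show "(\<pi> ^^ (n - j)) (vtx j) = x"
    using shift assms vtx_n by simp
  have "vtx (n - j + i + j) = vtx i"
    using assms vtx_mod[of "n + i"] by (simp add: add.commute)
  then show "(\<pi> ^^ (n - j + i)) (vtx j) = vtx i"
    using shift assms by simp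
  fix m assume m: "m < n - j + i"
  have "(m + j) mod n \<noteq> i"
    using m assms by (cases "m + j < n") (auto simp: le_mod_geq)
  then show "(\<pi> ^^ m) (vtx j) \<noteq> vtx i"
    using shift assms vtx_mod[of "m + j"] vtx_eq_iff[of "(m + j) mod n" i] by simp
qed

lemma inv_vtx: "1 \<le> j \<Longrightarrow> inv_into V \<pi> (vtx j) = vtx (j - 1)"
  using bij_funpow[of 1] inv_into_f_f[of \<pi> V "vtx (j - 1)"]
  by (cases j) (simp_all add: bij_betw_def)

abbreviation admissible_switches :: "('a set \<times> nat) set" where
  "admissible_switches \<equiv> {(e', i). e' \<in> E - ham_edges V \<pi> \<and> i \<in> {1, 2} \<and>
                                  admissible_switch V E \<pi> x e' i}"

lemma switch_1_admissible:
  assumes "1 \<le> i" "i + 2 \<le> j" "j + 2 \<le> n" "{vtx i, vtx j} \<in> E"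
    and "{x, vtx (i + 1)} \<in> E" "{vtx (j - 1), \<pi> x} \<in> E"
  shows "({vtx i, vtx j}, 1) \<in> admissible_switches"
proof -
  have "switch_edges 1 V \<pi> x (vtx i) (vtx j) \<subseteq> E"
    using assms ham_edges_subset[OF ham] inv_vtx[of j]
    unfolding switch_edges_def Let_def by auto
  then have "admissible_switch V E \<pi> x {vtx i, vtx j} 1"
    unfolding admissible_switch_def using on_dir_path_vtx[of i j] assms by auto
  then show ?thesis
    using assms chord_not_ham_edge by simp
qed

lemma switch_2_admissible:
  assumes "1 \<le> i" "i + 2 \<le> j" "j + 2 \<le> n" "{vtx i, vtx j} \<in> E"
    and "{x, vtx (j - 1)} \<in> E" "{\<pi> x, vtx (i + 1)} \<in> E"
  shows "({vtx i, vtx j}, 2) \<in> admissible_switches"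
proof -
  have "switch_edges 2 V \<pi> x (vtx i) (vtx j) \<subseteq> E"
    using assms ham_edges_subset[OF ham] inv_vtx[of j]
    unfolding switch_edges_def Let_def by auto
  then have "admissible_switch V E \<pi> x {vtx i, vtx j} 2"
    unfolding admissible_switch_def using on_dir_path_vtx[of i j] assms by auto
  then show ?thesis
    using assms chord_not_ham_edge by simp
qed

text \<open>For \<open>p < q\<close> the pair \<open>(p, q)\<close> stands for \<open>s\<^sub>1\<close> with new edge
  \<open>vtx (p - 1) vtx (q + 1)\<close>, which also adds \<open>x vtx p\<close> and \<open>vtx q \<pi>(x)\<close>; for \<open>q \<le> p\<close> it
  stands for \<open>s\<^sub>2\<close> with new edge \<open>vtx (q - 1) vtx (p + 1)\<close>. Both chords are required so that
  the condition is symmetric under exchanging the roles of \<open>x\<close> and \<open>\<pi> x\<close>.\<close>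

definition switch_pairs :: "(nat \<times> nat) set" where
  "switch_pairs = {(p, q). p \<in> {2..<n-2} \<and> q \<in> {2..<n-2} \<and>
     {x, vtx p} \<in> E \<and> {\<pi> x, vtx q} \<in> E \<and>
     {vtx (p - 1), vtx (q + 1)} \<in> E \<and> {vtx (p + 1), vtx (q - 1)} \<in> E}"

definition switch_of :: "nat \<times> nat \<Rightarrow> 'a set \<times> nat" where
  "switch_of = (\<lambda>(p, q). if p < q then ({vtx (p - 1), vtx (q + 1)}, 1)
                                 else ({vtx (q - 1), vtx (p + 1)}, 2))"

lemma switch_of_admissible:
  assumes "z \<in> switch_pairs"
  shows "switch_of z \<in> admissible_switches"
proof -
  obtain p q where z: "z = (p, q)" by fastforce
  consider "p < q" | "q \<le> p" by linarith
  then show ?thesis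
  proof cases
    case 1
    then have "({vtx (p - 1), vtx (q + 1)}, 1) \<in> admissible_switches"
      using assms z unfolding switch_pairs_def
      by (intro switch_1_admissible) (auto simp: insert_commute)
    then show ?thesis using 1 z by (simp add: switch_of_def)
  next
    case 2
    then have "({vtx (q - 1), vtx (p + 1)}, 2) \<in> admissible_switches"
      using assms z unfolding switch_pairs_def
      by (intro switch_2_admissible) (auto simp: insert_commute)
    then show ?thesis using 2 z by (simp add: switch_of_def)
  qed
qed

lemma inj_on_switch_of: "inj_on switch_of switch_pairs"
proof (rule inj_onI)
  fix z w assume z: "z \<in> switch_pairs" and w: "w \<in> switch_pairs"
    and eq: "switch_of z = switch_of w"
  obtain p q p' q' where zw: "z = (p, q)" "w = (p', q')" by fastforce
  have pos: "p - 1 < n" "q + 1 < n" "q - 1 < n" "p + 1 < n"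
    "p' - 1 < n" "q' + 1 < n" "q' - 1 < n" "p' + 1 < n" "2 \<le> p" "2 \<le> q" "2 \<le> p'" "2 \<le> q'"
    using z w zw unfolding switch_pairs_def by auto
  show "z = w"
  proof (cases "p < q")
    case True
    with eq zw have "p' < q'" "{vtx (p - 1), vtx (q + 1)} = {vtx (p' - 1), vtx (q' + 1)}"
      by (auto simp: switch_of_def split: if_splits)
    then have "{p - 1, q + 1} = {p' - 1, q' + 1}"
      using pos by (intro vtx_doubleton_eq) auto
    then show ?thesis
      using True \<open>p' < q'\<close> pos zw by (auto simp: doubleton_eq_iff)
  next
    case False
    with eq zw have "\<not> p' < q'" "{vtx (q - 1), vtx (p + 1)} = {vtx (q' - 1), vtx (p' + 1)}"
      by (auto simp: switch_of_def split: if_splits)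
    then have "{q - 1, p + 1} = {q' - 1, p' + 1}"
      using pos by (intro vtx_doubleton_eq) auto
    then show ?thesis
      using False \<open>\<not> p' < q'\<close> pos zw by (auto simp: doubleton_eq_iff)
  qed
qed

lemma card_switch_pairs_le:
  assumes "finite E"
  shows "card switch_pairs \<le> card admissible_switches"
proof (rule card_inj_on_le[OF inj_on_switch_of])
  show "switch_of ` switch_pairs \<subseteq> admissible_switches"
    using switch_of_admissible by (intro image_subsetI)
  have "admissible_switches \<subseteq> E \<times> {1, 2}"
    by (intro subsetI) (clarsimp split: prod.splits)
  then show "finite admissible_switches"
    using assms finite_subset by blast
qed

abbreviation neighbour_positions :: "'a \<Rightarrow> 'a set \<Rightarrow> nat set" where
  "neighbour_positions u X \<equiv> {p. p < n \<and> vtx p \<in> X \<and> {u, vtx p} \<in> E}"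

lemma card_neighbour_positions:
  assumes "X \<subseteq> V"
  shows "card (neighbour_positions u X) = deg_in E u X"
proof -
  let ?P = "neighbour_positions u X"
  have "{v \<in> X. {u, v} \<in> E} \<subseteq> vtx ` ?P"
  proof
    fix v assume v: "v \<in> {v \<in> X. {u, v} \<in> E}"
    then have "v \<in> vtx ` {..<n}" using assms vtx_image by blast
    then obtain p where "p < n" "v = vtx p" by blast
    then show "v \<in> vtx ` ?P" using v by blast
  qed
  then have "vtx ` ?P = {v \<in> X. {u, v} \<in> E}" by blast
  moreover have "inj_on vtx ?P"
    by (rule inj_on_subset[OF inj_on_vtx]) blast
  ultimately show ?thesis
    unfolding deg_in_def using card_image by fastforce
qed

lemma card_shifted_positions_le:
  assumes "inj_on s Q" "s ` Q \<subseteq> {..<n}" "finite X"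
  shows "card {q \<in> Q. vtx (s q) \<in> X} \<le> card X"
proof (rule card_inj_on_le[of "\<lambda>q. vtx (s q)"])
  show "inj_on (\<lambda>q. vtx (s q)) {q \<in> Q. vtx (s q) \<in> X}"
    using comp_inj_on[OF assms(1) inj_on_subset[OF inj_on_vtx assms(2)]]
    by (auto simp: comp_def intro: inj_on_subset)
qed (use assms(3) in auto)

lemma card_le_cover_by_neighbours:
  assumes "P \<subseteq> {..<n}" "finite C" "finite X" "finite Y"
    and cover: "\<And>p. p \<in> P \<Longrightarrow> p \<in> {2..<n-2} \<Longrightarrow> p \<in> C \<or> vtx (p - 1) \<in> X \<or> vtx (p + 1) \<in> Y"
  shows "card P \<le> card C + card X + card Y + 4"
proof -
  define I where "I = {2..<n-2}"
  define R1 where "R1 = {q \<in> I. vtx (q - 1) \<in> X}"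
  define R2 where "R2 = {q \<in> I. vtx (q + 1) \<in> Y}"
  have "P \<inter> I \<subseteq> C \<union> R1 \<union> R2"
    unfolding R1_def R2_def I_def using cover by blast
  then have "card (P \<inter> I) \<le> card (C \<union> R1 \<union> R2)"
    unfolding R1_def R2_def I_def using assms(2) by (intro card_mono) auto
  also have "\<dots> \<le> card C + card R1 + card R2"
    by (meson add_right_mono card_Un_le order_trans)
  finally have "card (P \<inter> I) \<le> card C + card R1 + card R2" .
  moreover have "card R1 \<le> card X"
    unfolding R1_def I_def using assms(3)
    by (intro card_shifted_positions_le) (auto simp: inj_on_def)
  moreover have "card R2 \<le> card Y"
    unfolding R2_def I_def using assms(4)
    by (intro card_shifted_positions_le) (auto simp: inj_on_def)
  moreover have "card P \<le> card (P \<inter> I) + 4"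
    unfolding I_def by (rule card_le_card_Int_inner_positions[OF assms(1)])
  ultimately show ?thesis by linarith
qed

end

locale biclique_cycle = dir_ham_cycle_at V E \<pi> x
  for V :: "'a set" and E \<pi> x +
  fixes A B W :: "'a set" and \<alpha> \<eta> \<nu> :: real
  assumes partition: "A \<inter> B = {}" "A \<union> B = V"
    and A_independent: "\<And>e. e \<in> E \<Longrightarrow> \<not> e \<subseteq> A"
    and B_edges_in_W: "\<And>u v. {u, v} \<in> E \<Longrightarrow> u \<in> B \<Longrightarrow> v \<in> B \<Longrightarrow> u \<in> W"
    and finite_W: "finite W" and card_W: "real (card W) \<le> 2 * \<alpha> * n"
    and card_B: "real (card B) \<le> (1 + \<alpha>) * n / 2"
    and deg_A: "\<And>a. a \<in> A \<Longrightarrow> \<nu> * n \<le> real (deg_in E a B)"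
    and deg_B: "\<And>b. b \<in> B \<Longrightarrow> (1/4 - \<eta>) * n \<le> real (deg_in E b A)"
    and few_low_degree: "real (card {a \<in> A. real (deg_in E a B) < (1/2 - \<eta>) * n}) \<le> \<alpha> * n"
    and parameters: "0 \<le> \<eta>" "\<eta> \<le> 1/40" "0 \<le> \<alpha>" "\<alpha> \<le> \<nu> / 12" "\<alpha> \<le> 1/32"
      "16 \<le> \<nu> * n" "40 \<le> n"
begin

abbreviation low :: "'a set" where
  "low \<equiv> {a \<in> A. real (deg_in E a B) < (1/2 - \<eta>) * n}"

abbreviation good_positions :: "nat set \<Rightarrow> nat set" where
  "good_positions P \<equiv> {p \<in> P \<inter> {2..<n-2}. vtx (p - 1) \<notin> W \<union> low \<and> vtx (p + 1) \<notin> W \<union> low}"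

abbreviation partners :: "nat \<Rightarrow> nat set \<Rightarrow> nat set" where
  "partners p Q \<equiv> {q \<in> Q \<inter> {2..<n-2}.
     {vtx (p - 1), vtx (q + 1)} \<in> E \<and> {vtx (p + 1), vtx (q - 1)} \<in> E}"

lemma finite_B: "finite B"
  using partition finite_V by (metis finite_Un)

lemma A_neighbour_in_B: "{u, v} \<in> E \<Longrightarrow> u \<in> A \<Longrightarrow> v \<in> V \<Longrightarrow> v \<in> B"
  using A_independent[of "{u, v}"] partition by auto

lemma B_neighbour_in_A: "{u, v} \<in> E \<Longrightarrow> u \<in> B \<Longrightarrow> v \<in> V \<Longrightarrow> v \<notin> W \<Longrightarrow> v \<in> A"
  using B_edges_in_W[of v u] partition by (auto simp: insert_commute)

lemma card_non_neighbours_le: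
  assumes "a \<notin> low" "a \<in> A"
  shows "real (card {b \<in> B. {a, b} \<notin> E}) \<le> \<eta> * n + \<alpha> * n / 2"
proof -
  have "card {b \<in> B. {a, b} \<notin> E} + deg_in E a B = card B"
    unfolding deg_in_def using finite_B
    by (subst card_Un_disjoint[symmetric]) (auto intro: arg_cong[where f = card])
  moreover have "(1/2 - \<eta>) * n \<le> real (deg_in E a B)"
    using assms by simp
  ultimately show ?thesis
    using card_B by (simp add: algebra_simps)
qed

lemma card_good_positions_ge:
  assumes "P \<subseteq> {..<n}" "\<nu> * n \<le> real (card P)"
  shows "\<nu> * n / 4 \<le> real (card (good_positions P))"
proof -
  have "finite (W \<union> low)"
    using finite_W partition finite_V by (auto intro: finite_subset)
  then have "card P \<le> card (good_positions P) + card (W \<union> low) + card (W \<union> low) + 4"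
    using assms(1) by (intro card_le_cover_by_neighbours) auto
  moreover have "card (W \<union> low) \<le> card W + card low"
    by (rule card_Un_le)
  moreover have "\<alpha> * n \<le> \<nu> / 12 * n"
    using parameters by (intro mult_right_mono) auto
  ultimately show ?thesis
    using assms(2) card_W few_low_degree parameters by linarith
qed

lemma card_partners_ge:
  assumes p: "p \<in> good_positions P" and P: "P \<subseteq> {p. p < n \<and> vtx p \<in> B}"
    and Q: "Q \<subseteq> {q. q < n \<and> vtx q \<in> A}" "(1/4 - \<eta>) * n \<le> real (card Q)"
  shows "n / 32 \<le> real (card (partners p Q))"
proof -
  define N1 where "N1 = {b \<in> B. {vtx (p + 1), b} \<notin> E}"
  define N2 where "N2 = {b \<in> B. {vtx (p - 1), b} \<notin> E}"
  define C where "C = partners p Q"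
  have "vtx p \<in> B" "2 \<le> p" using p P by auto
  then have "vtx (p - 1) \<in> A" "vtx (p + 1) \<in> A"
    using p vtx_pred_edge[of p] vtx_edge[of p] by (auto intro: B_neighbour_in_A)
  then have N1: "real (card N1) \<le> \<eta> * n + \<alpha> * n / 2"
    and N2: "real (card N2) \<le> \<eta> * n + \<alpha> * n / 2"
    unfolding N1_def N2_def using p by (auto intro: card_non_neighbours_le)
  have "card Q \<le> card C + card N1 + card N2 + 4"
  proof (rule card_le_cover_by_neighbours)
    fix q assume "q \<in> Q" "q \<in> {2..<n-2}"
    moreover from this have "vtx (q - 1) \<in> B" "vtx (q + 1) \<in> B"
      using Q(1) vtx_edge[of q] vtx_pred_edge[of q] by (auto intro: A_neighbour_in_B)
    ultimately show "q \<in> C \<or> vtx (q - 1) \<in> N1 \<or> vtx (q + 1) \<in> N2"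
      unfolding C_def N1_def N2_def by (auto simp: insert_commute)
  qed (use Q(1) finite_B in \<open>auto simp: C_def N1_def N2_def\<close>)
  moreover have "\<eta> * n \<le> n / 40" "\<alpha> * n \<le> n / 32"
    using parameters by (auto intro: mult_right_mono)
  moreover have "(1/4 - \<eta>) * n = n / 4 - \<eta> * n"
    by (simp add: algebra_simps)
  ultimately show ?thesis
    unfolding C_def[symmetric] using Q(2) N1 N2 parameters by linarith
qed

abbreviation cross_pairs :: "'a \<Rightarrow> 'a \<Rightarrow> (nat \<times> nat) set" where
  "cross_pairs u w \<equiv> SIGMA p:good_positions (neighbour_positions u B).
     partners p (neighbour_positions w A)"

lemma card_cross_pairs_ge:
  assumes "u \<in> A" "w \<in> B"
  shows "\<nu> * (real n)\<^sup>2 / 128 \<le> real (card (cross_pairs u w))"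
proof -
  define P where "P = neighbour_positions u B"
  define Q where "Q = neighbour_positions w A"
  define G where "G = good_positions P"
  have "\<nu> * n \<le> real (card P)"
    unfolding P_def using card_neighbour_positions[of B u] partition deg_A[OF assms(1)] by auto
  then have G: "\<nu> * n / 4 \<le> real (card G)"
    unfolding G_def P_def by (intro card_good_positions_ge) auto
  have "(1/4 - \<eta>) * n \<le> real (card Q)"
    unfolding Q_def using card_neighbour_positions[of A w] partition deg_B[OF assms(2)] by auto
  then have partners: "n / 32 \<le> real (card (partners p Q))" if "p \<in> G" for p
    using that unfolding G_def P_def Q_def by (intro card_partners_ge) auto
  have "real (card (SIGMA p:G. partners p Q)) = (\<Sum>p\<in>G. real (card (partners p Q)))"
    unfolding G_def by (subst card_SigmaI) auto
  also have "\<dots> \<ge> real (card G) * (n / 32)"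
    using partners by (intro sum_bounded_below) auto
  finally have "real (card G) * (n / 32) \<le> real (card (SIGMA p:G. partners p Q))" .
  moreover have "\<nu> * n / 4 * (n / 32) \<le> real (card G) * (n / 32)"
    using G by (intro mult_right_mono) auto
  ultimately show ?thesis
    unfolding G_def P_def Q_def by (simp add: power2_eq_square)
qed

lemma card_switch_pairs_ge:
  assumes "x \<in> A \<or> \<pi> x \<in> A"
  shows "\<nu> * (real n)\<^sup>2 / 128 \<le> real (card switch_pairs)"
proof -
  have finite: "finite switch_pairs"
    unfolding switch_pairs_def by (rule finite_subset[of _ "{2..<n-2} \<times> {2..<n-2}"]) auto
  have edge: "{x, \<pi> x} \<in> E"
    using vtx_edge[of 0] by simp
  from assms consider "x \<in> A" "\<pi> x \<in> B" | "\<pi> x \<in> A" "x \<in> B"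
    using A_neighbour_in_B[OF edge] A_neighbour_in_B[of "\<pi> x" x] edge x_in_V
    by (auto simp: insert_commute)
  then show ?thesis
  proof cases
    case 1
    have "cross_pairs x (\<pi> x) \<subseteq> switch_pairs"
      unfolding switch_pairs_def by auto
    then have "card (cross_pairs x (\<pi> x)) \<le> card switch_pairs"
      using finite by (rule card_mono[rotated])
    then show ?thesis
      using card_cross_pairs_ge[OF 1] by linarith
  next
    case 2
    have "prod.swap ` cross_pairs (\<pi> x) x \<subseteq> switch_pairs"
      unfolding switch_pairs_def by (auto simp: insert_commute)
    then have "card (prod.swap ` cross_pairs (\<pi> x) x) \<le> card switch_pairs"
      using finite by (rule card_mono[rotated])
    moreover have "card (prod.swap ` cross_pairs (\<pi> x) x) = card (cross_pairs (\<pi> x) x)"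
      by (rule card_image) (simp add: swap_inj_on)
    ultimately show ?thesis
      using card_cross_pairs_ge[OF 2] by linarith
  qed
qed

end

lemma biclique_cycle_of_superextremal:
  fixes \<alpha> \<eta> \<nu> :: real
  assumes parameters: "0 < \<eta>" "\<eta> \<le> 1/40" "\<nu> \<le> 1" "0 < \<alpha>" "\<alpha> \<le> \<nu> / 12" "\<alpha> \<le> 1/32"
      "40 \<le> \<nu> * card V"
    and biclique: "superextremal_biclique \<alpha> \<eta> \<nu> V E A B"
    and card_M: "real (card M) \<le> \<alpha> * card V"
    and A_independent: "\<forall>e\<in>E. \<not> e \<subseteq> A" and B_edges: "{e \<in> E. e \<subseteq> B} = M"
    and ham: "dir_ham_cycle V E \<pi>" and x: "x \<in> V"
  shows "biclique_cycle V E \<pi> x A B (\<Union>M) \<alpha> \<eta> \<nu>"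
proof -
  interpret dir_ham_cycle_at V E \<pi> x
    using ham x by unfold_locales
  have simple: "simple_graph V E" and partition: "A \<inter> B = {}" "A \<union> B = V"
    and balanced: "real (card B) - real (card A) \<le> \<alpha> * n"
    and few_low: "real (card {a \<in> A. real (deg_in E a B) < (1/2 - \<eta>) * n}) \<le> \<alpha> * n"
    and deg_A: "\<forall>a\<in>A. \<nu> * n \<le> real (deg_in E a B)"
    and deg_B: "\<forall>b\<in>B. (1/4 - \<eta>) * n \<le> real (deg_in E b A)"
    using biclique unfolding superextremal_biclique_def Let_def by auto
  have "card A + card B = n"
    using partition finite_V card_Un_disjoint[of A B] by (metis finite_Un)
  then have card_B: "real (card B) \<le> (1 + \<alpha>) * n / 2"
    using balanced by (simp add: algebra_simps)
  have "card (\<Union>M) \<le> (\<Sum>e\<in>M. card e)"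
    by (rule card_Union_le_sum_card)
  also have "\<dots> = 2 * card M"
    using B_edges simple_graph_card_edge[OF simple] by auto
  finally have card_W: "real (card (\<Union>M)) \<le> 2 * \<alpha> * n"
    using card_M by simp
  have finite_W: "finite (\<Union>M)"
    using B_edges partition finite_V by (auto intro: finite_subset)
  have "\<nu> * n \<le> n"
    using parameters by (intro mult_left_le_one_le) auto
  show ?thesis
  proof
    show "\<And>u v. {u, v} \<in> E \<Longrightarrow> u \<in> B \<Longrightarrow> v \<in> B \<Longrightarrow> u \<in> \<Union>M"
      using B_edges by blast
  qed (use partition A_independent finite_W card_W card_B deg_A deg_B few_low parameters
         \<open>\<nu> * n \<le> n\<close> in auto)
qed

lemma many_admissible_switches:
  fixes \<alpha> \<eta> \<nu> :: real
  assumes parameters: "0 < \<eta>" "\<eta> \<le> 1/40" "\<nu> \<le> 1" "0 < \<alpha>" "\<alpha> \<le> \<nu> / 12" "\<alpha> \<le> 1/32"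
      "40 \<le> \<nu> * card V"
    and biclique: "superextremal_biclique \<alpha> \<eta> \<nu> V E A B"
    and card_M: "real (card M) \<le> \<alpha> * card V"
    and A_independent: "\<forall>e\<in>E. \<not> e \<subseteq> A" and B_edges: "{e \<in> E. e \<subseteq> B} = M"
    and ham: "dir_ham_cycle V E \<pi>" and x: "x \<in> V" "{x, \<pi> x} \<notin> M"
  shows "\<nu> * (real (card V))\<^sup>2 / 128 \<le> real (card {(e', i). e' \<in> E - ham_edges V \<pi> \<and>
    i \<in> {1::nat, 2} \<and> admissible_switch V E \<pi> x e' i})"
proof -
  interpret biclique_cycle V E \<pi> x A B "\<Union>M" \<alpha> \<eta> \<nu>
    using assms by (intro biclique_cycle_of_superextremal) auto
  have "x \<in> A \<or> \<pi> x \<in> A"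
  proof (rule ccontr)
    assume "\<not> (x \<in> A \<or> \<pi> x \<in> A)"
    then have "{x, \<pi> x} \<subseteq> B"
      using partition x(1) \<pi>_in_V by blast
    then show False
      using B_edges vtx_edge[of 0] x(2) by auto
  qed
  moreover have "finite E"
    using biclique simple_graph_finite_edges unfolding superextremal_biclique_def Let_def by blast
  ultimately show ?thesis
    using card_switch_pairs_ge card_switch_pairs_le of_nat_mono by fastforce
qed

theorem mainTheorem14:
  shows "\<exists>\<eta>0>0. \<forall>\<eta>. 0 < \<eta> \<and> \<eta> \<le> \<eta>0 \<longrightarrow>
    (\<exists>\<nu>0>0. \<forall>\<nu>. 0 < \<nu> \<and> \<nu> \<le> \<nu>0 \<longrightarrow>
    (\<exists>\<beta>0>0. \<forall>\<beta>. 0 < \<beta> \<and> \<beta> \<le> \<beta>0 \<longrightarrow>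
    (\<exists>\<alpha>0>0. \<forall>\<alpha>. 0 < \<alpha> \<and> \<alpha> \<le> \<alpha>0 \<longrightarrow>
    (\<exists>n0::nat. \<forall>n\<ge>n0. \<forall>(V::'a set) (E::'a set set) A B M \<pi>.
       card V = n \<and>
       superextremal_biclique \<alpha> \<eta> \<nu> V E A B \<and>
       matching_in E B M \<and> real (card M) \<le> \<alpha> * real n \<and>
       (\<forall>e\<in>E. \<not> e \<subseteq> A) \<and>
       {e \<in> E. e \<subseteq> B} = M \<and>
       (\<forall>a\<in>A. \<forall>b\<in>B. {a, b} \<in> E \<longrightarrow>
          real (max (deg_in E a B) (deg_in E b A)) \<ge> (1/2 - \<eta>) * real n) \<and>
       dir_ham_cycle V E \<pi>
       \<longrightarrow> (\<forall>x\<in>V. {x, \<pi> x} \<notin> M \<longrightarrow>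
             real (card {(e', i). e' \<in> E - ham_edges V \<pi> \<and> i \<in> {1::nat, 2} \<and>
                                  admissible_switch V E \<pi> x e' i})
               \<ge> \<beta> * (real n)^2)))))"
  apply (rule exI[of _ "1/40"], intro conjI allI impI, simp)
  apply (rule exI[of _ 1], intro conjI allI impI, simp)
  subgoal for \<eta> \<nu>
    apply (rule exI[of _ "\<nu> / 128"], intro conjI allI impI, simp)
    subgoal for \<beta>
      apply (rule exI[of _ "min (\<nu> / 12) (1/32)"], intro conjI allI impI, simp)
      subgoal for \<alpha>
        apply (rule exI[of _ "nat \<lceil>40 / \<nu>\<rceil>"], intro allI impI ballI)
        subgoal premises prems for n V E A B M \<pi> x
        proof -
          from prems(6) have n: "card V = n" and hyps: "superextremal_biclique \<alpha> \<eta> \<nu> V E A B"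
            "real (card M) \<le> \<alpha> * card V" "\<forall>e\<in>E. \<not> e \<subseteq> A" "{e \<in> E. e \<subseteq> B} = M"
            "dir_ham_cycle V E \<pi>"
            by auto
          have "40 \<le> \<nu> * card V"
            using prems(2,5) n by (simp add: field_simps)
          then have "\<nu> * (real (card V))\<^sup>2 / 128 \<le> real (card {(e', i). e' \<in> E - ham_edges V \<pi> \<and>
              i \<in> {1::nat, 2} \<and> admissible_switch V E \<pi> x e' i})"
            using prems(1-4) hyps prems(7,8) by (intro many_admissible_switches) auto
          moreover have "\<beta> * (real n)\<^sup>2 \<le> \<nu> / 128 * (real n)\<^sup>2"
            using prems by (intro mult_right_mono) auto
          ultimately show ?thesis
            using n by simp
        qed
        done
      done
    done
  done

end
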